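(* Let $1<p<\infty$ and $W:\mathbb{M}^{3\times3}\to[0,+\infty]$ satisfy (H1)–(H5) below. Let $\Omega\subset\mathbb{R}^2$ be open and bounded, $\eta>0$, and $G:\overline\Omega\to\mathbb{M}^{3\times2}$ uniformly continuous with $|G^1(x)\wedge G^2(x)|\geq\eta$ for every $x\in\overline\Omega$. Then for every open set $U\subset\Omega$ there exists $\beta=\beta(\eta,\|G\|_{L^\infty})>0$ such that $$\int_U W_0(G(x))\,dx=\inf\Big\{\int_U W(G(x)|\phi(x))\,dx:\ \phi\in C^\infty(\overline\Omega,\mathbb{R}^3),\ \det(G(x)|\phi(x))\geq\tfrac1\beta\text{ for }x\in\overline\Omega,\ \|\phi\|_{L^\infty(\Omega)}\leq\beta\Big\}.$$
   Context: Hypotheses: (H1) $W$ continuous as a $[0,+\infty]$-valued function; (H2) $W(RF)=W(F)$ for $R\in SO(3)$; (H3) $W(F)<\infty$ if $\det F>0$ and $W(F)=+\infty$ if $\det F\leq0$; (H4) $W(F)\geq C_1|F|^p-1/C_1$; (H5) for each $\delta>0$, $W(F)\leq c_\delta(1+|F|^p)$ when $\det F\geq\delta$. $W_0(A):=\inf_{\xi\in\mathbb{R}^3}W(A|\xi)$, where $(A|\xi)$ is the $3\times3$ matrix with columns $A^1,A^2,\xi$; $\wedge$ is the vector product. *)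

theory Defs
  imports "HOL-Analysis.Analysis" "HOL-Analysis.Cross3"
begin

definition augment :: "real^2^3 \<Rightarrow> real^3 \<Rightarrow> real^3^3" where
  "augment A \<xi> = (\<chi> i j. if j = 1 then A $ i $ 1 else if j = 2 then A $ i $ 2 else \<xi> $ i)"

definition col32 :: "real^2^3 \<Rightarrow> 2 \<Rightarrow> real^3" where
  "col32 A k = (\<chi> i. A $ i $ k)"

definition W0 :: "(real^3^3 \<Rightarrow> ennreal) \<Rightarrow> real^2^3 \<Rightarrow> ennreal" where
  "W0 W A = (INF \<xi>. W (augment A \<xi>))"

fun iter_partial :: "2 list \<Rightarrow> (real^2 \<Rightarrow> real^3) \<Rightarrow> real^2 \<Rightarrow> real^3" where
  "iter_partial [] f = f"
| "iter_partial (i # is) f = (\<lambda>x. frechet_derivative (iter_partial is f) (at x) (axis i 1))"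

definition smooth_on :: "(real^2) set \<Rightarrow> (real^2 \<Rightarrow> real^3) \<Rightarrow> bool" where
  "smooth_on S f \<longleftrightarrow> (\<forall>is. iter_partial is f differentiable_on S)"

definition smooth_up_to_boundary :: "(real^2) set \<Rightarrow> (real^2 \<Rightarrow> real^3) \<Rightarrow> bool" where
  "smooth_up_to_boundary \<Omega> f \<longleftrightarrow> (\<exists>V. open V \<and> closure \<Omega> \<subseteq> V \<and> smooth_on V f)"

definition hyp_W :: "real \<Rightarrow> (real^3^3 \<Rightarrow> ennreal) \<Rightarrow> bool" where
  "hyp_W p W \<longleftrightarrow>
     continuous_on UNIV W
   \<and> (\<forall>R F. orthogonal_matrix R \<and> det R = 1 \<longrightarrow> W (R ** F) = W F)
   \<and> (\<forall>F. det F > 0 \<longrightarrow> W F < \<infinity>)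
   \<and> (\<forall>F. det F \<le> 0 \<longrightarrow> W F = \<infinity>)
   \<and> (\<exists>C1>0. \<forall>F. ennreal (C1 * norm F powr p - 1 / C1) \<le> W F)
   \<and> (\<forall>\<delta>>0. \<exists>c. \<forall>F. det F \<ge> \<delta> \<longrightarrow> W F \<le> ennreal (c * (1 + norm F powr p)))"

end

theory Submission
  imports Defs
begin

(*
  The inequality "<=" holds pointwise, since W0 (G x) <= W (G x | phi x). For ">=", coercivity (H4)
  and growth (H5) show that W0 is bounded on matrices A with |A| <= M and |A^1 x A^2| >= eta, and that
  every xi with W (A | xi) <= W0 A + 1 lies in a fixed ball and satisfies det (A | xi) >= delta for a
  delta > 0 depending only on eta and M; this fixes beta. W0 is upper semicontinuous as an infimum of
  continuous functions and lower semicontinuous where finite by coercivity, so near each point of the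
  closure a single vector is a near-minimizer. A partition of unity subordinate to a finite subcover,
  with a single active weight on each of finitely many disjoint closed sets that exhaust the domain
  up to small measure, glues these vectors into a continuous field that is almost optimal outside a
  small set and, by convexity of {xi. |xi| <= R, delta/2 <= xi . n}, satisfies the constraints
  everywhere. Stone-Weierstrass replaces the field by a polynomial, which is smooth up to the
  boundary, and uniform continuity of W on the compact set where det >= delta/4 controls the change
  of energy.
*)

section \<open>Polynomial maps are smooth\<close>

lemma real_polynomial_function_has_derivative:
  fixes p :: "'a::real_normed_vector \<Rightarrow> real"
  assumes "real_polynomial_function p"
  obtains D where "\<And>x. (p has_derivative D x) (at x)" "\<And>v. real_polynomial_function (\<lambda>x. D x v)"
proof -
  from assms have "\<exists>D. (\<forall>x. (p has_derivative D x) (at x)) \<and> (\<forall>v. real_polynomial_function (\<lambda>x. D x v))"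
  proof (induction p rule: real_polynomial_function.induct)
    case (linear f)
    then show ?case
      by (intro exI[of _ "\<lambda>x. f"]) (auto intro: bounded_linear.has_derivative[OF _ has_derivative_ident])
  next
    case (const c)
    then show ?case by (intro exI[of _ "\<lambda>x h. 0"]) auto
  next
    case (add f g)
    then obtain Df Dg where "\<forall>x. (f has_derivative Df x) (at x)" "\<forall>v. real_polynomial_function (\<lambda>x. Df x v)"
      "\<forall>x. (g has_derivative Dg x) (at x)" "\<forall>v. real_polynomial_function (\<lambda>x. Dg x v)" by blast
    then show ?case
      by (intro exI[of _ "\<lambda>x h. Df x h + Dg x h"]) (auto intro!: has_derivative_add)
  next
    case (mult f g)
    then obtain Df Dg where "\<forall>x. (f has_derivative Df x) (at x)" "\<forall>v. real_polynomial_function (\<lambda>x. Df x v)"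
      "\<forall>x. (g has_derivative Dg x) (at x)" "\<forall>v. real_polynomial_function (\<lambda>x. Dg x v)" by blast
    with mult.hyps show ?case
      by (intro exI[of _ "\<lambda>x h. f x * Dg x h + Df x h * g x"])
        (auto intro!: has_derivative_mult real_polynomial_function.intros(3,4))
  qed
  with that show ?thesis by blast
qed

lemma polynomial_function_frechet_derivative:
  fixes f :: "'a::euclidean_space \<Rightarrow> 'b::euclidean_space"
  assumes "polynomial_function f"
  shows "polynomial_function (\<lambda>x. frechet_derivative f (at x) v)"
  unfolding polynomial_function_iff_Basis_inner
proof
  fix b :: 'b assume "b \<in> Basis"
  with assms have "real_polynomial_function (\<lambda>x. f x \<bullet> b)"
    using polynomial_function_iff_Basis_inner by blast
  then obtain D where D: "\<And>x. ((\<lambda>x. f x \<bullet> b) has_derivative D x) (at x)"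
    and D_poly: "\<And>v. real_polynomial_function (\<lambda>x. D x v)"
    using real_polynomial_function_has_derivative by blast
  have "frechet_derivative f (at x) v \<bullet> b = D x v" for x
  proof -
    have "(f has_derivative frechet_derivative f (at x)) (at x)"
      using assms differentiable_at_polynomial_function frechet_derivative_works by blast
    then have "((\<lambda>x. f x \<bullet> b) has_derivative (\<lambda>h. frechet_derivative f (at x) h \<bullet> b)) (at x)"
      using has_derivative_inner_left by blast
    then have "(\<lambda>h. frechet_derivative f (at x) h \<bullet> b) = D x"
      using D has_derivative_unique by blast
    then show ?thesis by metis
  qed
  with D_poly show "real_polynomial_function (\<lambda>x. frechet_derivative f (at x) v \<bullet> b)"
    by simp
qed

lemma polynomial_function_iter_partial:
  "polynomial_function g \<Longrightarrow> polynomial_function (iter_partial is g)"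
  by (induction "is") (auto intro: polynomial_function_frechet_derivative)

lemma polynomial_function_smooth_up_to_boundary:
  "polynomial_function g \<Longrightarrow> smooth_up_to_boundary \<Omega> g"
  unfolding smooth_up_to_boundary_def smooth_on_def
  by (intro exI[of _ UNIV])
    (auto intro!: differentiable_on_polynomial_function polynomial_function_iter_partial)

section \<open>The matrix (A|xi) and the normal vector A^1 x A^2\<close>

definition normal32 :: "real^2^3 \<Rightarrow> real^3" where
  "normal32 A = cross3 (col32 A 1) (col32 A 2)"

lemma det_augment: "det (augment A \<xi>) = \<xi> \<bullet> normal32 A"
  by (simp add: normal32_def det_3 cross3_def inner_vec_def sum_3 augment_def col32_def algebra_simps)

lemma norm_augment_squared: "(norm (augment A \<xi>))\<^sup>2 = (norm A)\<^sup>2 + (norm \<xi>)\<^sup>2"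
  by (simp add: power2_norm_eq_inner inner_vec_def sum_3 sum_2 augment_def)

lemma norm_le_norm_augment: "norm \<xi> \<le> norm (augment A \<xi>)"
  by (rule power2_le_imp_le) (simp_all add: norm_augment_squared)

lemma norm_augment_le: "norm (augment A \<xi>) \<le> norm A + norm \<xi>"
  by (rule power2_le_imp_le) (simp_all add: norm_augment_squared power2_sum)

lemma continuous_on_augment [continuous_intros]:
  "continuous_on S f \<Longrightarrow> continuous_on S g \<Longrightarrow> continuous_on S (\<lambda>x. augment (f x) (g x))"
  unfolding augment_def
  apply (intro continuous_on_vec_lambda)
  subgoal for i j by (cases "j = 1"; cases "j = 2") (auto intro!: continuous_intros)
  done

lemma continuous_on_normal32 [continuous_intros]:
  fixes f :: "'a::t2_space \<Rightarrow> real^2^3"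
  shows "continuous_on S f \<Longrightarrow> continuous_on S (\<lambda>x. normal32 (f x))"
  unfolding normal32_def col32_def
  by (intro continuous_on_cross continuous_on_vec_lambda continuous_intros)

lemma norm_col32_le: "norm (col32 A k) \<le> norm A"
proof (rule power2_le_imp_le)
  have "(norm (col32 A k))\<^sup>2 = (\<Sum>i\<in>UNIV. (A$i$k)\<^sup>2)"
    unfolding power2_norm_eq_inner inner_vec_def col32_def by (simp add: power2_eq_square)
  also have "\<dots> \<le> (\<Sum>i\<in>UNIV. (norm (A$i))\<^sup>2)"
    by (intro sum_mono) (metis abs_ge_zero power2_abs power_mono component_le_norm_cart)
  also have "\<dots> = (norm A)\<^sup>2"
    by (simp add: power2_norm_eq_inner inner_vec_def)
  finally show "(norm (col32 A k))\<^sup>2 \<le> (norm A)\<^sup>2" .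
qed simp

lemma norm_cross3_le: "norm (cross3 x y) \<le> norm x * norm y"
proof (rule power2_le_imp_le)
  show "(norm (cross3 x y))\<^sup>2 \<le> (norm x * norm y)\<^sup>2"
    using norm_cross_dot[of x y] by (metis le_add_same_cancel1 zero_le_power2)
qed simp

lemma norm_normal32_le: "norm (normal32 A) \<le> (norm A)\<^sup>2"
proof -
  have "norm (normal32 A) \<le> norm (col32 A 1) * norm (col32 A 2)"
    unfolding normal32_def by (rule norm_cross3_le)
  also have "\<dots> \<le> norm A * norm A"
    by (intro mult_mono norm_col32_le) auto
  finally show ?thesis by (simp add: power2_eq_square)
qed

lemma continuous_on_det: "continuous_on S (det :: real^'n^'n \<Rightarrow> real)"
  unfolding det_def by (intro continuous_intros)

lemma tendsto_ennreal_eventually_near: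
  fixes f :: "'a \<Rightarrow> ennreal"
  assumes f: "(f \<longlongrightarrow> l) F" and "l \<noteq> \<infinity>" "0 < e"
  shows "\<forall>\<^sub>F y in F. l \<le> f y + ennreal e \<and> f y \<le> l + ennreal e"
proof -
  obtain r where r: "l = ennreal r" "0 \<le> r" using \<open>l \<noteq> \<infinity>\<close> by (cases l) auto
  have "l < l + ennreal e" using r \<open>0 < e\<close> by (auto simp flip: ennreal_plus intro!: ennreal_lessI)
  with f have "\<forall>\<^sub>F y in F. f y < l + ennreal e" by (rule order_tendstoD(2))
  then have upper: "\<forall>\<^sub>F y in F. f y \<le> l + ennreal e" by (rule eventually_mono) simp
  have lower: "\<forall>\<^sub>F y in F. l \<le> f y + ennreal e"
  proof (cases "r \<le> e")
    case True
    then show ?thesis using r by (intro always_eventually allI add_increasing) (auto intro: ennreal_leI)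
  next
    case False
    with f have "\<forall>\<^sub>F y in F. ennreal (r - e) < f y"
      using r \<open>0 < e\<close> by (intro order_tendstoD(1)) (auto intro: ennreal_lessI)
    then show ?thesis
    proof (rule eventually_mono)
      fix y assume "ennreal (r - e) < f y"
      then have "ennreal (r - e) + ennreal e \<le> f y + ennreal e" by (intro add_right_mono) simp
      with r False \<open>0 < e\<close> show "l \<le> f y + ennreal e" by (simp flip: ennreal_plus)
    qed
  qed
  from lower upper show ?thesis by (rule eventually_conj)
qed

lemma compact_uniformly_continuous_ennreal:
  fixes f :: "'a::metric_space \<Rightarrow> ennreal"
  assumes "continuous_on S f" "compact S" "\<And>z. z \<in> S \<Longrightarrow> f z \<noteq> \<infinity>" "0 < e"
  obtains d where "0 < d" "\<And>z z'. z \<in> S \<Longrightarrow> z' \<in> S \<Longrightarrow> dist z' z < d \<Longrightarrow> f z' \<le> f z + ennreal e"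
proof -
  have "continuous_on S (\<lambda>z. enn2real (f z))"
    unfolding continuous_on_def
  proof
    fix z assume "z \<in> S"
    with assms(1,3) show "((\<lambda>z. enn2real (f z)) \<longlongrightarrow> enn2real (f z)) (at z within S)"
      by (intro tendsto_enn2real) (auto simp: continuous_on_def less_top)
  qed
  then have "uniformly_continuous_on S (\<lambda>z. enn2real (f z))"
    using assms(2) compact_uniformly_continuous by blast
  then obtain d where "0 < d"
    and d: "\<And>z z'. z \<in> S \<Longrightarrow> z' \<in> S \<Longrightarrow> dist z' z < d \<Longrightarrow> dist (enn2real (f z')) (enn2real (f z)) < e"
    unfolding uniformly_continuous_on_def using \<open>0 < e\<close> by metis
  have "f z' \<le> f z + ennreal e" if "z \<in> S" "z' \<in> S" "dist z' z < d" for z z'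
  proof -
    have "enn2real (f z') \<le> enn2real (f z) + e"
      using d[OF that] by (simp add: dist_real_def)
    then have "ennreal (enn2real (f z')) \<le> ennreal (enn2real (f z)) + ennreal e"
      using \<open>0 < e\<close> by (simp flip: ennreal_plus)
    with assms(3) that(1,2) show ?thesis by (simp add: less_top)
  qed
  with \<open>0 < d\<close> that show ?thesis by blast
qed

lemma borel_measurable_continuous_on_indicator_ennreal:
  fixes f :: "'a::topological_space \<Rightarrow> ennreal"
  assumes "A \<in> sets borel" "continuous_on A f"
  shows "(\<lambda>x. f x * indicator A x) \<in> borel_measurable borel"
  using borel_measurable_restrict_space_iff_ennreal[of A borel f]
    borel_measurable_continuous_on_restrict[OF assms(2)] assms(1) by simp

lemma set_nn_integral_le_off_small_set:
  fixes f g :: "'a \<Rightarrow> ennreal"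
  assumes g: "(\<lambda>x. g x * indicator U x) \<in> borel_measurable M" and "U \<in> sets M" "B \<in> sets M"
    and good: "\<And>x. x \<in> U - B \<Longrightarrow> f x \<le> g x + ennreal a"
    and bad: "\<And>x. x \<in> U \<inter> B \<Longrightarrow> f x \<le> ennreal c"
  shows "(\<integral>\<^sup>+x\<in>U. f x \<partial>M) \<le> (\<integral>\<^sup>+x\<in>U. g x \<partial>M) + ennreal a * emeasure M U + ennreal c * emeasure M B"
proof -
  have "f x * indicator U x \<le> g x * indicator U x + ennreal a * indicator U x + ennreal c * indicator B x" for x
    using good[of x] bad[of x] by (cases "x \<in> U"; cases "x \<in> B") (auto simp: add_increasing)
  then have "(\<integral>\<^sup>+x\<in>U. f x \<partial>M)
      \<le> (\<integral>\<^sup>+x. g x * indicator U x + ennreal a * indicator U x + ennreal c * indicator B x \<partial>M)"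
    by (intro nn_integral_mono) auto
  also have "\<dots> = (\<integral>\<^sup>+x\<in>U. g x \<partial>M) + ennreal a * emeasure M U + ennreal c * emeasure M B"
    using g assms(2,3) by (simp add: nn_integral_add nn_integral_cmult_indicator)
  finally show ?thesis .
qed

lemma compact_nat_indexed_subcover:
  assumes "compact K" "\<And>x. x \<in> K \<Longrightarrow> open (N x)" "\<And>x. x \<in> K \<Longrightarrow> x \<in> N x"
  obtains m :: nat and h where "\<And>i. i < m \<Longrightarrow> h i \<in> K" "K \<subseteq> (\<Union>i<m. N (h i))"
proof -
  obtain T where "T \<subseteq> K" "finite T" and T: "K \<subseteq> (\<Union>x\<in>T. N x)"
  proof (rule compactE_image[OF assms(1), of K N])
    show "\<And>x. x \<in> K \<Longrightarrow> open (N x)" and "K \<subseteq> (\<Union>x\<in>K. N x)"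
      using assms(2,3) by blast+
  qed blast
  from \<open>finite T\<close> obtain m :: nat and h where Th: "T = h ` {i. i < m}"
    unfolding finite_conv_nat_seg_image by blast
  show ?thesis
  proof (rule that)
    show "h i \<in> K" if "i < m" for i
      using \<open>T \<subseteq> K\<close> that Th by blast
    show "K \<subseteq> (\<Union>i<m. N (h i))"
      using T Th by (auto simp: lessThan_def)
  qed
qed

section \<open>Continuous selections off a set of small measure\<close>

lemma open_eq_positivity_set:
  fixes S :: "'a::metric_space set"
  assumes "open S"
  obtains w :: "'a \<Rightarrow> real" where "continuous_on UNIV w" "\<And>x. 0 \<le> w x" "\<And>x. 0 < w x \<longleftrightarrow> x \<in> S"
proof (cases "S = UNIV")
  case True
  then show ?thesis by (intro that[of "\<lambda>x. 1"]) auto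
next
  case False
  have "setdist {x} (- S) = 0 \<longleftrightarrow> x \<notin> S" for x
    using setdist_eq_0_closed[of "- S" x] assms False by auto
  then show ?thesis
    by (intro that[of "\<lambda>x. setdist {x} (- S)"] continuous_on_setdist setdist_pos_le)
      (metis setdist_pos_le order_less_le)
qed

lemma closed_disjoint_inner_approximation:
  fixes K :: "'a::euclidean_space set" and N :: "nat \<Rightarrow> 'a set"
  assumes "K \<in> sets borel" "\<And>i. i < m \<Longrightarrow> N i \<in> sets borel" "K \<subseteq> (\<Union>i<m. N i)" "0 < e"
  obtains C where "\<And>i. i < m \<Longrightarrow> closed (C i)" "\<And>i. i < m \<Longrightarrow> C i \<subseteq> K \<inter> N i"
    "disjoint_family_on C {..<m}" "emeasure lborel (K - (\<Union>i<m. C i)) \<le> ennreal e"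
proof (cases "m = 0")
  case True
  with assms(3) show ?thesis by (intro that[of "\<lambda>i. {}"]) (auto simp: disjoint_family_on_def)
next
  case False
  define P where "P = disjointed (\<lambda>i. K \<inter> N i)"
  have P_borel: "P i \<in> sets borel" if "i < m" for i
    unfolding P_def disjointed_def using assms(1,2) that by (intro sets.Diff sets.finite_UN) auto
  have "\<forall>i\<in>{..<m}. \<exists>C. closed C \<and> C \<subseteq> P i \<and> emeasure lebesgue (P i - C) < ennreal (e / m)"
  proof
    fix i assume "i \<in> {..<m}"
    then have "P i \<in> sets lebesgue"
      using P_borel sets_completionI_sets sets_lborel by (metis lessThan_iff)
    moreover have "0 < e / m" using False \<open>0 < e\<close> by simp
    ultimately show "\<exists>C. closed C \<and> C \<subseteq> P i \<and> emeasure lebesgue (P i - C) < ennreal (e / m)"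
      using sets_lebesgue_inner_closed by metis
  qed
  from bchoice[OF this] obtain C where
    "\<forall>i\<in>{..<m}. closed (C i) \<and> C i \<subseteq> P i \<and> emeasure lebesgue (P i - C i) < ennreal (e / m)"
    by blast
  then have C_closed: "closed (C i)" and C_sub: "C i \<subseteq> P i"
    and C_small: "emeasure lebesgue (P i - C i) < ennreal (e / m)" if "i < m" for i
    using that by auto
  have CP: "C i \<subseteq> K \<inter> N i" if "i < m" for i
    using C_sub[OF that] disjointed_subset[of "\<lambda>i. K \<inter> N i" i] unfolding P_def by (rule subset_trans)
  have "disjoint_family_on C {..<m}"
    unfolding disjoint_family_on_def
  proof (intro ballI impI)
    fix i j assume ij: "i \<in> {..<m}" "j \<in> {..<m}" "i \<noteq> j"
    have "P i \<inter> P j = {}"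
      using disjoint_family_disjointed[of "\<lambda>i. K \<inter> N i"] ij(3)
      unfolding disjoint_family_on_def P_def by blast
    with C_sub[of i] C_sub[of j] ij show "C i \<inter> C j = {}" by auto
  qed
  have "(\<Union>i<m. P i) = (\<Union>i<m. K \<inter> N i)"
    using finite_UN_disjointed_eq[of "\<lambda>i. K \<inter> N i" m] unfolding P_def atLeast0LessThan .
  with assms(3) have K_sub: "K - (\<Union>i<m. C i) \<subseteq> (\<Union>i<m. P i - C i)" by blast
  have diff_sets: "P i - C i \<in> sets lebesgue" if "i < m" for i
    using P_borel[OF that] C_closed[OF that] by (auto intro!: sets.Diff)
  have "K - (\<Union>i<m. C i) \<in> sets borel"
    using assms(1) C_closed by (intro sets.Diff sets.finite_UN) auto
  then have "emeasure lborel (K - (\<Union>i<m. C i)) = emeasure lebesgue (K - (\<Union>i<m. C i))"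
    by simp
  also have "\<dots> \<le> emeasure lebesgue (\<Union>i<m. P i - C i)"
    using K_sub diff_sets by (intro emeasure_mono) auto
  also have "\<dots> \<le> (\<Sum>i<m. emeasure lebesgue (P i - C i))"
    using diff_sets by (intro emeasure_subadditive_finite) auto
  also have "\<dots> \<le> (\<Sum>i<m. ennreal (e / m))"
    using C_small by (intro sum_mono less_imp_le) auto
  also have "\<dots> = ennreal (\<Sum>i<m. e / m)"
    using \<open>0 < e\<close> by (intro sum_ennreal) auto
  also have "(\<Sum>i<m. e / m) = e"
    using False by simp
  finally have "emeasure lborel (K - (\<Union>i<m. C i)) \<le> ennreal e" .
  with C_closed CP \<open>disjoint_family_on C {..<m}\<close> show ?thesis by (rule that)
qed

lemma disjoint_closed_cover_weights:
  fixes N C :: "nat \<Rightarrow> 'a::metric_space set"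
  assumes N: "\<And>i. i < m \<Longrightarrow> open (N i)"
    and C: "\<And>i. i < m \<Longrightarrow> closed (C i)" "\<And>i. i < m \<Longrightarrow> C i \<subseteq> N i"
    and disj: "disjoint_family_on C {..<m}" and cover: "K \<subseteq> (\<Union>i<m. N i)"
  obtains w :: "nat \<Rightarrow> 'a \<Rightarrow> real" where
    "\<And>i. i < m \<Longrightarrow> continuous_on UNIV (w i)" "\<And>i x. i < m \<Longrightarrow> 0 \<le> w i x"
    "\<And>i x. i < m \<Longrightarrow> 0 < w i x \<Longrightarrow> x \<in> N i" "\<And>x. x \<in> K \<Longrightarrow> \<exists>i<m. 0 < w i x"
    "\<And>i j x. i < m \<Longrightarrow> j < m \<Longrightarrow> x \<in> C i \<Longrightarrow> 0 < w j x \<longleftrightarrow> j = i"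
proof -
  define Op where "Op i = N i - (\<Union>j\<in>{..<m} - {i}. C j)" for i
  have "\<forall>i\<in>{..<m}. \<exists>w::'a \<Rightarrow> real. continuous_on UNIV w \<and> (\<forall>x. 0 \<le> w x) \<and> (\<forall>x. 0 < w x \<longleftrightarrow> x \<in> Op i)"
  proof
    fix i assume "i \<in> {..<m}"
    then have "open (Op i)"
      unfolding Op_def using N C(1) by (intro open_Diff closed_UN) auto
    then obtain w :: "'a \<Rightarrow> real" where "continuous_on UNIV w" "\<And>x. 0 \<le> w x" "\<And>x. 0 < w x \<longleftrightarrow> x \<in> Op i"
      using open_eq_positivity_set by blast
    then show "\<exists>w::'a \<Rightarrow> real. continuous_on UNIV w \<and> (\<forall>x. 0 \<le> w x) \<and> (\<forall>x. 0 < w x \<longleftrightarrow> x \<in> Op i)"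
      by blast
  qed
  from bchoice[OF this] obtain w :: "nat \<Rightarrow> 'a \<Rightarrow> real" where
    "\<forall>i\<in>{..<m}. continuous_on UNIV (w i) \<and> (\<forall>x. 0 \<le> w i x) \<and> (\<forall>x. 0 < w i x \<longleftrightarrow> x \<in> Op i)"
    by blast
  then have w_cont: "continuous_on UNIV (w i)" and w_nonneg: "0 \<le> w i x"
    and w_pos: "0 < w i x \<longleftrightarrow> x \<in> Op i" if "i < m" for i x
    using that by auto
  show ?thesis
  proof (rule that[OF w_cont w_nonneg])
    show "x \<in> N i" if "i < m" "0 < w i x" for i x
      using w_pos that unfolding Op_def by auto
    show "\<exists>i<m. 0 < w i x" if xK: "x \<in> K" for x
    proof (cases "\<exists>k<m. x \<in> C k")
      case True
      then obtain k where k: "k < m" "x \<in> C k" by blast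
      with C(2) disj have "x \<in> Op k"
        unfolding Op_def disjoint_family_on_def by blast
      with w_pos k(1) show ?thesis by blast
    next
      case False
      obtain i where "i < m" "x \<in> N i" using cover xK by blast
      with False w_pos show ?thesis unfolding Op_def by auto
    qed
    show "0 < w j x \<longleftrightarrow> j = i" if i: "i < m" and j: "j < m" and x: "x \<in> C i" for i j x
    proof -
      have "x \<notin> C k" if "k < m" "k \<noteq> i" for k
        using disj i x that unfolding disjoint_family_on_def by blast
      then show ?thesis
        using w_pos[OF j] C(2)[OF i] i x unfolding Op_def by auto
    qed
  qed
qed

lemma normalized_sum_in_convex_hull:
  fixes w :: "nat \<Rightarrow> real" and v :: "nat \<Rightarrow> 'b::real_vector"
  assumes w: "\<And>i. i < m \<Longrightarrow> 0 \<le> w i" and S: "0 < (\<Sum>i<m. w i)"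
  shows "(1 / (\<Sum>i<m. w i)) *\<^sub>R (\<Sum>i<m. w i *\<^sub>R v i) \<in> convex hull (v ` {i. i < m \<and> 0 < w i})"
proof -
  let ?S = "\<Sum>i<m. w i" and ?A = "{i. i < m \<and> 0 < w i}"
  have w_zero: "w i = 0" if "i < m" "\<not> 0 < w i" for i
    using w[OF that(1)] that(2) by linarith
  have sum_A: "(\<Sum>i<m. f i) = (\<Sum>i\<in>?A. f i)" if "\<And>i. w i = 0 \<Longrightarrow> f i = 0"
    for f :: "nat \<Rightarrow> 'c::comm_monoid_add"
    by (rule sum.mono_neutral_right) (auto intro: that w_zero)
  have "(1 / ?S) *\<^sub>R (\<Sum>i<m. w i *\<^sub>R v i) = (\<Sum>i<m. (w i / ?S) *\<^sub>R v i)"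
    by (simp add: scaleR_sum_right)
  also have "\<dots> = (\<Sum>i\<in>?A. (w i / ?S) *\<^sub>R v i)"
    by (rule sum_A) simp
  also have "\<dots> \<in> convex hull (v ` ?A)"
  proof (rule convex_sum)
    have "?S = (\<Sum>i\<in>?A. w i)"
      by (rule sum_A)
    with S show "(\<Sum>i\<in>?A. w i / ?S) = 1"
      by (simp flip: sum_divide_distrib)
    show "0 \<le> w i / ?S" if "i \<in> ?A" for i
      using that S by simp
    show "v i \<in> convex hull (v ` ?A)" if "i \<in> ?A" for i
      using that by (intro hull_inc) simp
  qed (simp_all add: convex_convex_hull)
  finally show ?thesis .
qed

lemma continuous_convex_interpolation:
  fixes N C :: "nat \<Rightarrow> 'a::metric_space set" and v :: "nat \<Rightarrow> 'b::real_normed_vector"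
  assumes "\<And>i. i < m \<Longrightarrow> open (N i)"
    and "\<And>i. i < m \<Longrightarrow> closed (C i)" "\<And>i. i < m \<Longrightarrow> C i \<subseteq> N i"
    and "disjoint_family_on C {..<m}" "K \<subseteq> (\<Union>i<m. N i)"
  obtains \<phi> where "continuous_on K \<phi>"
    "\<And>x. x \<in> K \<Longrightarrow> \<phi> x \<in> convex hull (v ` {i. i < m \<and> x \<in> N i})"
    "\<And>i x. i < m \<Longrightarrow> x \<in> C i \<Longrightarrow> \<phi> x = v i"
proof -
  obtain w :: "nat \<Rightarrow> 'a \<Rightarrow> real" where w_cont: "\<And>i. i < m \<Longrightarrow> continuous_on UNIV (w i)"
    and w_nonneg: "\<And>i x. i < m \<Longrightarrow> 0 \<le> w i x" and w_supp: "\<And>i x. i < m \<Longrightarrow> 0 < w i x \<Longrightarrow> x \<in> N i"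
    and w_cover: "\<And>x. x \<in> K \<Longrightarrow> \<exists>i<m. 0 < w i x"
    and w_C: "\<And>i j x. i < m \<Longrightarrow> j < m \<Longrightarrow> x \<in> C i \<Longrightarrow> 0 < w j x \<longleftrightarrow> j = i"
    using disjoint_closed_cover_weights[OF assms] by blast
  define S where "S x = (\<Sum>i<m. w i x)" for x
  define \<phi> where "\<phi> x = (1 / S x) *\<^sub>R (\<Sum>i<m. w i x *\<^sub>R v i)" for x
  have S_pos: "0 < S x" if x: "x \<in> K" for x
  proof -
    obtain i where "i < m" "0 < w i x" using w_cover[OF x] by blast
    moreover have "w i x \<le> S x"
      unfolding S_def using w_nonneg \<open>i < m\<close> by (intro member_le_sum) auto
    ultimately show ?thesis by linarith
  qed
  have w_cont_K: "continuous_on K (w i)" if "i \<in> {..<m}" for i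
    using that continuous_on_subset[OF w_cont subset_UNIV] by blast
  then have "continuous_on K S"
    unfolding S_def by (intro continuous_on_sum)
  with w_cont_K S_pos have "continuous_on K \<phi>"
    unfolding \<phi>_def by (intro continuous_intros) (auto dest: S_pos)
  moreover have "\<phi> x \<in> convex hull (v ` {i. i < m \<and> x \<in> N i})" if x: "x \<in> K" for x
  proof -
    have "\<phi> x \<in> convex hull (v ` {i. i < m \<and> 0 < w i x})"
      using w_nonneg S_pos[OF x] unfolding \<phi>_def S_def
      by (intro normalized_sum_in_convex_hull) auto
    also have "\<dots> \<subseteq> convex hull (v ` {i. i < m \<and> x \<in> N i})"
      using w_supp by (intro hull_mono image_mono) auto
    finally show ?thesis .
  qed
  moreover have "\<phi> x = v i" if i: "i < m" and x: "x \<in> C i" for i x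
  proof -
    have others: "w j x = 0" if "j < m" "j \<noteq> i" for j
    proof -
      have "\<not> 0 < w j x" using w_C[OF i that(1) x] that(2) by simp
      with w_nonneg[OF that(1), of x] show ?thesis by simp
    qed
    have "(\<Sum>j<m. w j x *\<^sub>R v j) = (\<Sum>j<m. if j = i then w i x *\<^sub>R v i else 0)"
      by (rule sum.cong) (auto simp: others)
    moreover have "S x = (\<Sum>j<m. if j = i then w i x else 0)"
      unfolding S_def by (rule sum.cong) (auto simp: others)
    moreover have "0 < w i x" using w_C[OF i i x] by simp
    ultimately show ?thesis unfolding \<phi>_def using i by simp
  qed
  ultimately show ?thesis by (rule that)
qed

lemma continuous_convex_selection:
  fixes K :: "'a::euclidean_space set" and v :: "nat \<Rightarrow> 'b::real_normed_vector"
  assumes "K \<in> sets borel" "\<And>i. i < m \<Longrightarrow> open (N i)" "K \<subseteq> (\<Union>i<m. N i)" "0 < e"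
  obtains \<phi> B where "continuous_on K \<phi>" "B \<in> sets borel" "emeasure lborel B \<le> ennreal e"
    "\<And>x. x \<in> K \<Longrightarrow> \<phi> x \<in> convex hull (v ` {i. i < m \<and> x \<in> N i})"
    "\<And>x. x \<in> K - B \<Longrightarrow> \<exists>i<m. x \<in> N i \<and> \<phi> x = v i"
proof -
  have N_borel: "N i \<in> sets borel" if "i < m" for i
    using assms(2)[OF that] by (rule borel_open)
  then obtain C where C_closed: "\<And>i. i < m \<Longrightarrow> closed (C i)" and CN: "\<And>i. i < m \<Longrightarrow> C i \<subseteq> K \<inter> N i"
    and disj: "disjoint_family_on C {..<m}" and small: "emeasure lborel (K - (\<Union>i<m. C i)) \<le> ennreal e"
    using closed_disjoint_inner_approximation[OF assms(1) N_borel assms(3,4)] by blast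
  have CN': "C i \<subseteq> N i" if "i < m" for i
    using CN[OF that] by blast
  obtain \<phi> where \<phi>_cont: "continuous_on K \<phi>"
    and \<phi>_hull: "\<And>x. x \<in> K \<Longrightarrow> \<phi> x \<in> convex hull (v ` {i. i < m \<and> x \<in> N i})"
    and \<phi>_C: "\<And>i x. i < m \<Longrightarrow> x \<in> C i \<Longrightarrow> \<phi> x = v i"
    using continuous_convex_interpolation[OF assms(2) C_closed CN' disj assms(3)] by blast
  show ?thesis
  proof (rule that[OF \<phi>_cont _ small \<phi>_hull])
    show "K - (\<Union>i<m. C i) \<in> sets borel"
      using assms(1) C_closed by (intro sets.Diff sets.finite_UN) auto
    show "\<exists>i<m. x \<in> N i \<and> \<phi> x = v i" if "x \<in> K - (K - (\<Union>i<m. C i))" for x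
    proof -
      from that obtain i where "i < m" "x \<in> C i" by blast
      with CN' \<phi>_C show ?thesis by blast
    qed
  qed
qed

section \<open>Stored energy densities\<close>

lemma W0_le: "W0 W A \<le> W (augment A \<xi>)"
  unfolding W0_def by (rule INF_lower) simp

locale energy_density =
  fixes p :: real and W :: "real^3^3 \<Rightarrow> ennreal"
  assumes hyp: "hyp_W p W" and p: "1 < p"
begin

lemma continuous_on_W: "continuous_on S W"
proof -
  have "continuous_on UNIV W" using hyp unfolding hyp_W_def by (elim conjE) assumption
  then show ?thesis by (rule continuous_on_subset) simp
qed

lemma continuous_on_W_augment [continuous_intros]:
  assumes "continuous_on S f" "continuous_on S g"
  shows "continuous_on S (\<lambda>x. W (augment (f x) (g x)))"
  by (rule continuous_on_compose2[OF continuous_on_W continuous_on_augment[OF assms] subset_UNIV])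

lemma W_finite_iff: "W F \<noteq> \<infinity> \<longleftrightarrow> 0 < det F"
proof -
  have "\<forall>F. 0 < det F \<longrightarrow> W F < \<infinity>"
    using hyp unfolding hyp_W_def by (elim conjE) assumption
  moreover have "\<forall>F. det F \<le> 0 \<longrightarrow> W F = \<infinity>"
    using hyp unfolding hyp_W_def by (elim conjE) assumption
  ultimately show ?thesis by (metis less_irrefl not_le)
qed

lemma W_sublevel_bounded:
  assumes "c \<noteq> \<infinity>"
  obtains R where "\<And>F. W F \<le> c \<Longrightarrow> norm F \<le> R"
proof -
  obtain L where L: "c = ennreal L" "0 \<le> L" using assms by (cases c) auto
  have "\<exists>C1>0. \<forall>F. ennreal (C1 * norm F powr p - 1 / C1) \<le> W F"
    using hyp unfolding hyp_W_def by (elim conjE) assumption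
  then obtain C1 where "0 < C1" and C1: "\<And>F. ennreal (C1 * norm F powr p - 1 / C1) \<le> W F"
    by blast
  have "norm F \<le> max 1 ((L + 1 / C1) / C1)" if "W F \<le> c" for F
  proof -
    have "ennreal (C1 * norm F powr p - 1 / C1) \<le> ennreal L"
      using order_trans[OF C1 that] L(1) by simp
    then have "C1 * norm F powr p - 1 / C1 \<le> L"
      using L(2) by (simp add: ennreal_le_iff)
    then have "norm F powr p \<le> (L + 1 / C1) / C1"
      using \<open>0 < C1\<close> by (simp add: field_simps)
    moreover have "norm F \<le> norm F powr p" if "1 \<le> norm F"
      using powr_mono[of 1 p "norm F"] that p by simp
    ultimately show ?thesis by force
  qed
  then show ?thesis by (rule that)
qed

lemma W_bounded_where_det_ge:
  assumes "0 < \<delta>"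
  obtains L where "0 \<le> L" "\<And>F. \<delta> \<le> det F \<Longrightarrow> norm F \<le> B \<Longrightarrow> W F \<le> ennreal L"
proof -
  have "\<forall>\<delta>>0. \<exists>c. \<forall>F. \<delta> \<le> det F \<longrightarrow> W F \<le> ennreal (c * (1 + norm F powr p))"
    using hyp unfolding hyp_W_def by (elim conjE) assumption
  with assms obtain c where c: "\<And>F. \<delta> \<le> det F \<Longrightarrow> W F \<le> ennreal (c * (1 + norm F powr p))"
    by blast
  define L where "L = max 0 c * (1 + B powr p)"
  have "W F \<le> ennreal L" if "\<delta> \<le> det F" "norm F \<le> B" for F
  proof -
    have "norm F powr p \<le> B powr p"
      using that(2) p by (intro powr_mono2) auto
    then have "c * (1 + norm F powr p) \<le> L"
      unfolding L_def by (intro order_trans[OF mult_right_mono[of c "max 0 c"]] mult_left_mono) auto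
    then show ?thesis
      using c[OF that(1)] by (meson ennreal_leI order_trans)
  qed
  moreover have "0 \<le> L" unfolding L_def by auto
  ultimately show ?thesis using that by blast
qed

lemma W_sublevel_det_bounded_below:
  assumes "c \<noteq> \<infinity>"
  obtains \<delta> where "0 < \<delta>" "\<And>F. W F \<le> c \<Longrightarrow> \<delta> \<le> det F"
proof -
  obtain R where R: "\<And>F. W F \<le> c \<Longrightarrow> norm F \<le> R"
    using W_sublevel_bounded[OF assms] by blast
  define T where "T = {F. W F \<le> c}"
  have "closed T"
    unfolding T_def by (intro closed_Collect_le continuous_on_W continuous_on_const)
  moreover have "bounded T"
    unfolding T_def bounded_iff using R by blast
  ultimately have "compact T" using compact_eq_bounded_closed by blast
  show ?thesis
  proof (cases "T = {}")
    case True
    then show ?thesis by (intro that[of 1]) (auto simp: T_def)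
  next
    case False
    obtain F0 where "F0 \<in> T" and F0: "\<And>F. F \<in> T \<Longrightarrow> det F0 \<le> det F"
      using continuous_attains_inf[OF \<open>compact T\<close> False continuous_on_det] by blast
    have "0 < det F0"
      using \<open>F0 \<in> T\<close> assms unfolding T_def W_finite_iff[symmetric] by (auto simp: top_unique)
    with F0 show ?thesis by (intro that[of "det F0"]) (auto simp: T_def)
  qed
qed

lemma W0_bounded:
  assumes "0 < \<eta>"
  obtains L where "0 \<le> L" "\<And>A. norm A \<le> M \<Longrightarrow> \<eta> \<le> norm (normal32 A) \<Longrightarrow> W0 W A \<le> ennreal L"
proof -
  obtain L where "0 \<le> L" and L: "\<And>F. \<eta> \<le> det F \<Longrightarrow> norm F \<le> M + 1 \<Longrightarrow> W F \<le> ennreal L"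
    using W_bounded_where_det_ge[OF assms] by blast
  have "W0 W A \<le> ennreal L" if A: "norm A \<le> M" "\<eta> \<le> norm (normal32 A)" for A
  proof -
    define \<xi> where "\<xi> = (1 / norm (normal32 A)) *\<^sub>R normal32 A"
    have "0 < norm (normal32 A)" using A assms by linarith
    then have "det (augment A \<xi>) = norm (normal32 A)" "norm \<xi> = 1"
      unfolding det_augment \<xi>_def by (simp_all add: power2_norm_eq_inner[symmetric] power2_eq_square)
    then have "W (augment A \<xi>) \<le> ennreal L"
      using A norm_augment_le[of A \<xi>] by (intro L) auto
    then show ?thesis using W0_le order_trans by blast
  qed
  with \<open>0 \<le> L\<close> show ?thesis by (rule that)
qed

lemma W0_lower_semicontinuous:
  assumes fin: "W0 W A0 \<noteq> \<infinity>" and "a < W0 W A0"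
  shows "\<forall>\<^sub>F A in at A0. a < W0 W A"
proof -
  obtain a' where "a < a'" "a' < W0 W A0" using \<open>a < W0 W A0\<close> dense by blast
  (* By coercivity only the \<xi> in a fixed ball matter, and the tube lemma makes
     a' < W (A | \<xi>) uniform over that compact ball for A near A0. *)
  obtain R where R: "\<And>F. W F \<le> W0 W A0 \<Longrightarrow> norm F \<le> R"
    using W_sublevel_bounded[OF fin] by blast
  define Z where "Z = {z :: (real^2^3) \<times> (real^3). a' < W (augment (fst z) (snd z))}"
  have "open Z"
    unfolding Z_def
    by (intro open_Collect_less continuous_on_const continuous_on_W_augment continuous_on_fst
        continuous_on_snd continuous_on_id)
  have "(A0, \<xi>) \<in> Z" for \<xi>
    unfolding Z_def using order.strict_trans2[OF \<open>a' < W0 W A0\<close> W0_le] by simp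
  then have "{A0} \<times> cball 0 R \<subseteq> Z" by auto
  from Elementary_Topology.tube_lemma[OF compact_cball \<open>open Z\<close> this]
  obtain X where "A0 \<in> X" "open X" and X: "X \<times> cball 0 R \<subseteq> Z"
    by blast
  have lower: "a' \<le> W (augment A \<xi>)" if "A \<in> X" for A \<xi>
  proof (cases "norm \<xi> \<le> R")
    case True
    with X that have "(A, \<xi>) \<in> Z" by auto
    then show ?thesis unfolding Z_def by simp
  next
    case False
    have "\<not> W (augment A \<xi>) \<le> W0 W A0"
    proof
      assume "W (augment A \<xi>) \<le> W0 W A0"
      with R have "norm (augment A \<xi>) \<le> R" .
      with False norm_le_norm_augment[of \<xi> A] show False by linarith
    qed
    with \<open>a' < W0 W A0\<close> show ?thesis by simp
  qed
  have "a < W0 W A" if "A \<in> X" for A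
  proof -
    have "a' \<le> W0 W A"
      unfolding W0_def by (rule INF_greatest) (rule lower[OF that])
    with \<open>a < a'\<close> show ?thesis by simp
  qed
  then show ?thesis
    using \<open>open X\<close> \<open>A0 \<in> X\<close> eventually_at_topological by blast
qed

lemma isCont_W0:
  assumes "W0 W A0 \<noteq> \<infinity>"
  shows "isCont (W0 W) A0"
  unfolding continuous_at
proof (rule order_tendstoI)
  show "\<forall>\<^sub>F A in at A0. a < W0 W A" if "a < W0 W A0" for a
    using assms that by (rule W0_lower_semicontinuous)
next
  fix a assume "W0 W A0 < a"
  then obtain \<xi> where "W (augment A0 \<xi>) < a"
    unfolding W0_def by (auto simp: INF_less_iff)
  moreover have "((\<lambda>A. W (augment A \<xi>)) \<longlongrightarrow> W (augment A0 \<xi>)) (at A0)"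
    using continuous_on_W_augment[OF continuous_on_id continuous_on_const, of UNIV \<xi>]
    by (simp add: continuous_on_def)
  ultimately have "\<forall>\<^sub>F A in at A0. W (augment A \<xi>) < a"
    by (intro order_tendstoD(2))
  then show "\<forall>\<^sub>F A in at A0. W0 W A < a"
    by (rule eventually_mono) (rule le_less_trans[OF W0_le])
qed

lemma continuous_on_W0_comp:
  assumes "continuous_on K G" "\<And>x. x \<in> K \<Longrightarrow> W0 W (G x) \<noteq> \<infinity>"
  shows "continuous_on K (\<lambda>x. W0 W (G x))"
proof (rule continuous_on_compose2[OF _ assms(1) subset_refl])
  show "continuous_on (G ` K) (W0 W)"
    using assms(2) isCont_W0 by (intro continuous_at_imp_continuous_on) auto
qed

lemma near_minimizers_nondegenerate:
  assumes "0 < \<eta>"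
  obtains R \<delta> where "0 < \<delta>"
    "\<And>A. norm A \<le> M \<Longrightarrow> \<eta> \<le> norm (normal32 A) \<Longrightarrow> W0 W A \<noteq> \<infinity>"
    "\<And>A \<xi>. norm A \<le> M \<Longrightarrow> \<eta> \<le> norm (normal32 A) \<Longrightarrow> W (augment A \<xi>) \<le> W0 W A + 1
      \<Longrightarrow> norm \<xi> \<le> R \<and> \<delta> \<le> \<xi> \<bullet> normal32 A"
proof -
  obtain L where "0 \<le> L" and L: "\<And>A. norm A \<le> M \<Longrightarrow> \<eta> \<le> norm (normal32 A) \<Longrightarrow> W0 W A \<le> ennreal L"
    using W0_bounded[OF assms] by blast
  have fin: "ennreal (L + 1) \<noteq> \<infinity>" by simp
  obtain R where R: "\<And>F. W F \<le> ennreal (L + 1) \<Longrightarrow> norm F \<le> R"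
    using W_sublevel_bounded[OF fin] by blast
  obtain \<delta> where "0 < \<delta>" and \<delta>: "\<And>F. W F \<le> ennreal (L + 1) \<Longrightarrow> \<delta> \<le> det F"
    using W_sublevel_det_bounded_below[OF fin] by blast
  show ?thesis
  proof (rule that[OF \<open>0 < \<delta>\<close>])
    show "W0 W A \<noteq> \<infinity>" if "norm A \<le> M" "\<eta> \<le> norm (normal32 A)" for A
      using L[OF that] by (auto simp: top_unique)
    show "norm \<xi> \<le> R \<and> \<delta> \<le> \<xi> \<bullet> normal32 A"
      if "norm A \<le> M" "\<eta> \<le> norm (normal32 A)" "W (augment A \<xi>) \<le> W0 W A + 1" for A \<xi>
    proof -
      have "W0 W A + 1 \<le> ennreal (L + 1)"
        using L[OF that(1,2)] \<open>0 \<le> L\<close> by (simp add: add_right_mono)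
      with that(3) have W_le: "W (augment A \<xi>) \<le> ennreal (L + 1)" by (rule order_trans)
      have "norm \<xi> \<le> R"
        using norm_le_norm_augment R[OF W_le] by (rule order_trans)
      with \<delta>[OF W_le] show ?thesis by (simp add: det_augment)
    qed
  qed
qed

lemma eventually_W_augment_le_W0:
  fixes G :: "'a::metric_space \<Rightarrow> real^2^3"
  assumes G: "continuous_on K G" and fin: "\<And>y. y \<in> K \<Longrightarrow> W0 W (G y) \<noteq> \<infinity>" and x: "x \<in> K"
    and \<xi>: "W (augment (G x) \<xi>) \<le> W0 W (G x) + ennreal e" and "0 < e"
  shows "\<forall>\<^sub>F y in at x within K. W (augment (G y) \<xi>) \<le> W0 W (G y) + ennreal (3 * e)"
proof -
  have \<xi>_fin: "W (augment (G x) \<xi>) \<noteq> \<infinity>"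
    using \<xi> fin[OF x] by (auto simp: top_unique)
  have "((\<lambda>y. W (augment (G y) \<xi>)) \<longlongrightarrow> W (augment (G x) \<xi>)) (at x within K)"
    using continuous_on_W_augment[OF G continuous_on_const] x by (simp add: continuous_on_def)
  from tendsto_ennreal_eventually_near[OF this \<xi>_fin \<open>0 < e\<close>]
  have "\<forall>\<^sub>F y in at x within K. W (augment (G y) \<xi>) \<le> W (augment (G x) \<xi>) + ennreal e"
    by (rule eventually_mono) simp
  moreover have "((\<lambda>y. W0 W (G y)) \<longlongrightarrow> W0 W (G x)) (at x within K)"
    using continuous_on_W0_comp[OF G fin] x by (simp add: continuous_on_def)
  from tendsto_ennreal_eventually_near[OF this fin[OF x] \<open>0 < e\<close>]
  have "\<forall>\<^sub>F y in at x within K. W0 W (G x) \<le> W0 W (G y) + ennreal e"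
    by (rule eventually_mono) simp
  ultimately show ?thesis
  proof eventually_elim
    case (elim y)
    have "W (augment (G y) \<xi>) \<le> W (augment (G x) \<xi>) + ennreal e" by (rule elim(1))
    also have "\<dots> \<le> (W0 W (G x) + ennreal e) + ennreal e"
      using \<xi> by (rule add_right_mono)
    also have "\<dots> \<le> ((W0 W (G y) + ennreal e) + ennreal e) + ennreal e"
      using elim(2) by (intro add_right_mono)
    also have "\<dots> = W0 W (G y) + ennreal (3 * e)"
      using \<open>0 < e\<close> by (simp add: add.assoc flip: ennreal_plus)
    finally show ?case .
  qed
qed

lemma local_near_minimizer:
  fixes G :: "'a::metric_space \<Rightarrow> real^2^3"
  assumes G: "continuous_on K G" and fin: "\<And>y. y \<in> K \<Longrightarrow> W0 W (G y) \<noteq> \<infinity>" and x: "x \<in> K"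
    and \<epsilon>: "0 < \<epsilon>" "\<epsilon> \<le> 1" and "0 < \<delta>"
    and nondeg: "\<And>\<xi>. W (augment (G x) \<xi>) \<le> W0 W (G x) + 1 \<Longrightarrow> norm \<xi> \<le> R \<and> \<delta> \<le> \<xi> \<bullet> normal32 (G x)"
  obtains \<xi> N where "open N" "x \<in> N" "norm \<xi> \<le> R"
    "\<And>y. y \<in> N \<inter> K \<Longrightarrow> \<delta>/2 \<le> \<xi> \<bullet> normal32 (G y) \<and> W (augment (G y) \<xi>) \<le> W0 W (G y) + ennreal \<epsilon>"
proof -
  define e where "e = \<epsilon> / 3"
  have "0 < e" "e \<le> \<epsilon>" "e \<le> 1" using \<epsilon> unfolding e_def by auto
  have "W0 W (G x) < W0 W (G x) + ennreal e"
    using fin[OF x] \<open>0 < e\<close> by (cases "W0 W (G x)") (auto simp flip: ennreal_plus intro!: ennreal_lessI)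
  then obtain \<xi> where \<xi>: "W (augment (G x) \<xi>) < W0 W (G x) + ennreal e"
    unfolding W0_def by (auto simp: INF_less_iff)
  have "W0 W (G x) + ennreal e \<le> W0 W (G x) + 1"
    using \<open>e \<le> 1\<close> by (intro add_left_mono) simp
  with \<xi> have "norm \<xi> \<le> R" and \<xi>_\<delta>: "\<delta> \<le> \<xi> \<bullet> normal32 (G x)"
    using nondeg by (meson less_imp_le order_trans)+
  have "\<forall>\<^sub>F y in at x within K. W (augment (G y) \<xi>) \<le> W0 W (G y) + ennreal \<epsilon>"
    using eventually_W_augment_le_W0[OF G fin x less_imp_le[OF \<xi>] \<open>0 < e\<close>] by (simp add: e_def)
  moreover have "((\<lambda>y. \<xi> \<bullet> normal32 (G y)) \<longlongrightarrow> \<xi> \<bullet> normal32 (G x)) (at x within K)"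
    using continuous_on_inner[OF continuous_on_const continuous_on_normal32[OF G], of \<xi>] x
    by (simp add: continuous_on_def)
  then have "\<forall>\<^sub>F y in at x within K. \<delta>/2 < \<xi> \<bullet> normal32 (G y)"
    using \<xi>_\<delta> \<open>0 < \<delta>\<close> by (intro order_tendstoD(1)) auto
  ultimately have "\<forall>\<^sub>F y in at x within K.
      \<delta>/2 \<le> \<xi> \<bullet> normal32 (G y) \<and> W (augment (G y) \<xi>) \<le> W0 W (G y) + ennreal \<epsilon>"
    by eventually_elim simp
  then obtain N where "open N" "x \<in> N" and N: "\<And>y. y \<in> N \<Longrightarrow> y \<noteq> x \<Longrightarrow> y \<in> K
      \<Longrightarrow> \<delta>/2 \<le> \<xi> \<bullet> normal32 (G y) \<and> W (augment (G y) \<xi>) \<le> W0 W (G y) + ennreal \<epsilon>"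
    unfolding eventually_at_topological by blast
  have "W (augment (G x) \<xi>) \<le> W0 W (G x) + ennreal \<epsilon>"
    using \<xi> \<open>e \<le> \<epsilon>\<close> by (meson add_left_mono ennreal_leI less_imp_le order_trans)
  with N \<xi>_\<delta> \<open>0 < \<delta>\<close> have "\<delta>/2 \<le> \<xi> \<bullet> normal32 (G y) \<and> W (augment (G y) \<xi>) \<le> W0 W (G y) + ennreal \<epsilon>"
    if "y \<in> N \<inter> K" for y
    using that by (cases "y = x") auto
  with \<open>open N\<close> \<open>x \<in> N\<close> \<open>norm \<xi> \<le> R\<close> show ?thesis by (rule that)
qed

lemma continuous_near_minimizer:
  fixes G :: "'a::euclidean_space \<Rightarrow> real^2^3"
  assumes K: "compact K" and G: "continuous_on K G" and fin: "\<And>x. x \<in> K \<Longrightarrow> W0 W (G x) \<noteq> \<infinity>"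
    and \<epsilon>: "0 < \<epsilon>" "\<epsilon> \<le> 1" and "0 < \<delta>"
    and nondeg: "\<And>x \<xi>. x \<in> K \<Longrightarrow> W (augment (G x) \<xi>) \<le> W0 W (G x) + 1
      \<Longrightarrow> norm \<xi> \<le> R \<and> \<delta> \<le> \<xi> \<bullet> normal32 (G x)"
    and "0 < e"
  obtains \<phi> B where "continuous_on K \<phi>" "B \<in> sets borel" "emeasure lborel B \<le> ennreal e"
    "\<And>x. x \<in> K \<Longrightarrow> norm (\<phi> x) \<le> R \<and> \<delta>/2 \<le> \<phi> x \<bullet> normal32 (G x)"
    "\<And>x. x \<in> K - B \<Longrightarrow> W (augment (G x) (\<phi> x)) \<le> W0 W (G x) + ennreal \<epsilon>"
proof -
  define good where
    "good \<xi> y \<longleftrightarrow> \<delta>/2 \<le> \<xi> \<bullet> normal32 (G y) \<and> W (augment (G y) \<xi>) \<le> W0 W (G y) + ennreal \<epsilon>" for \<xi> y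
  have "\<forall>x\<in>K. \<exists>\<xi> N. open N \<and> x \<in> N \<and> norm \<xi> \<le> R \<and> (\<forall>y\<in>N \<inter> K. good \<xi> y)"
  proof
    fix x assume "x \<in> K"
    show "\<exists>\<xi> N. open N \<and> x \<in> N \<and> norm \<xi> \<le> R \<and> (\<forall>y\<in>N \<inter> K. good \<xi> y)"
    proof (rule local_near_minimizer[OF G fin \<open>x \<in> K\<close> \<epsilon> \<open>0 < \<delta>\<close> nondeg[OF \<open>x \<in> K\<close>]])
      fix \<xi> N assume "open N" "x \<in> N" "norm \<xi> \<le> R"
        and good_N: "\<And>y. y \<in> N \<inter> K \<Longrightarrow> \<delta>/2 \<le> \<xi> \<bullet> normal32 (G y) \<and> W (augment (G y) \<xi>) \<le> W0 W (G y) + ennreal \<epsilon>"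
      then show ?thesis
        unfolding good_def by (intro exI[of _ \<xi>] exI[of _ N] conjI ballI) (simp_all add: good_N)
    qed
  qed
  from bchoice[OF this] obtain \<xi> where
    "\<forall>x\<in>K. \<exists>N. open N \<and> x \<in> N \<and> norm (\<xi> x) \<le> R \<and> (\<forall>y\<in>N \<inter> K. good (\<xi> x) y)"
    by blast
  from bchoice[OF this] obtain N where
    N: "\<forall>x\<in>K. open (N x) \<and> x \<in> N x \<and> norm (\<xi> x) \<le> R \<and> (\<forall>y\<in>N x \<inter> K. good (\<xi> x) y)"
    by blast
  obtain m :: nat and h where hK: "\<And>i. i < m \<Longrightarrow> h i \<in> K" and cover: "K \<subseteq> (\<Union>i<m. N (h i))"
    using compact_nat_indexed_subcover[OF K, of N] N by blast
  have N_open: "open (N (h i))" if "i < m" for i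
    using N hK[OF that] by blast
  obtain \<phi> B where \<phi>: "continuous_on K \<phi>" and B: "B \<in> sets borel" "emeasure lborel B \<le> ennreal e"
    and hull: "\<And>x. x \<in> K \<Longrightarrow> \<phi> x \<in> convex hull ((\<lambda>i. \<xi> (h i)) ` {i. i < m \<and> x \<in> N (h i)})"
    and sel: "\<And>x. x \<in> K - B \<Longrightarrow> \<exists>i<m. x \<in> N (h i) \<and> \<phi> x = \<xi> (h i)"
    using continuous_convex_selection[OF borel_closed[OF compact_imp_closed[OF K]] N_open cover \<open>0 < e\<close>]
    by blast
  show ?thesis
  proof (rule that[OF \<phi> B])
    fix x assume "x \<in> K"
    let ?C = "cball 0 R \<inter> {\<xi>. \<delta>/2 \<le> normal32 (G x) \<bullet> \<xi>}"
    have "\<xi> (h i) \<in> ?C" if "i < m" "x \<in> N (h i)" for i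
    proof -
      have "norm (\<xi> (h i)) \<le> R" "good (\<xi> (h i)) x"
        using N hK[OF that(1)] that(2) \<open>x \<in> K\<close> by blast+
      then show ?thesis unfolding good_def by (simp add: inner_commute)
    qed
    then have "(\<lambda>i. \<xi> (h i)) ` {i. i < m \<and> x \<in> N (h i)} \<subseteq> ?C" by blast
    then have "convex hull ((\<lambda>i. \<xi> (h i)) ` {i. i < m \<and> x \<in> N (h i)}) \<subseteq> ?C"
      by (rule hull_minimal) (intro convex_Int convex_cball convex_halfspace_ge)
    with hull[OF \<open>x \<in> K\<close>] show "norm (\<phi> x) \<le> R \<and> \<delta>/2 \<le> \<phi> x \<bullet> normal32 (G x)"
      by (auto simp: inner_commute)
  next
    fix x assume "x \<in> K - B"
    with sel obtain i where "i < m" "x \<in> N (h i)" and \<phi>x: "\<phi> x = \<xi> (h i)" by blast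
    with N hK \<open>x \<in> K - B\<close> have "good (\<xi> (h i)) x" by blast
    then show "W (augment (G x) (\<phi> x)) \<le> W0 W (G x) + ennreal \<epsilon>"
      unfolding good_def \<phi>x by simp
  qed
qed

lemma W_augment_uniformly_continuous:
  assumes "0 < \<delta>" "0 < e"
  obtains d where "0 < d"
    "\<And>A \<xi> \<xi>'. norm A \<le> M \<Longrightarrow> norm \<xi> \<le> r \<Longrightarrow> norm \<xi>' \<le> r \<Longrightarrow> \<delta> \<le> \<xi> \<bullet> normal32 A
      \<Longrightarrow> \<delta> \<le> \<xi>' \<bullet> normal32 A \<Longrightarrow> dist \<xi>' \<xi> < d \<Longrightarrow> W (augment A \<xi>') \<le> W (augment A \<xi>) + ennreal e"
proof -
  define Q where "Q = (cball 0 M \<times> cball 0 r) \<inter> {z. \<delta> \<le> snd z \<bullet> normal32 (fst z)}"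
  have "compact Q"
    unfolding Q_def
    by (intro compact_Int_closed compact_Times compact_cball closed_Collect_le continuous_on_const
        continuous_on_inner continuous_on_snd continuous_on_normal32 continuous_on_fst continuous_on_id)
  moreover have "W (augment (fst z) (snd z)) \<noteq> \<infinity>" if "z \<in> Q" for z
    using that \<open>0 < \<delta>\<close> unfolding Q_def W_finite_iff det_augment by auto
  moreover have "continuous_on Q (\<lambda>z. W (augment (fst z) (snd z)))"
    by (intro continuous_on_W_augment continuous_on_fst continuous_on_snd continuous_on_id)
  ultimately obtain d where "0 < d" and d: "\<And>z z'. z \<in> Q \<Longrightarrow> z' \<in> Q \<Longrightarrow> dist z' z < d
      \<Longrightarrow> W (augment (fst z') (snd z')) \<le> W (augment (fst z) (snd z)) + ennreal e"
    using compact_uniformly_continuous_ennreal[OF _ _ _ \<open>0 < e\<close>] by blast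
  show ?thesis
  proof (rule that[OF \<open>0 < d\<close>])
    fix A \<xi> \<xi>' assume "norm A \<le> M" "norm \<xi> \<le> r" "norm \<xi>' \<le> r" "\<delta> \<le> \<xi> \<bullet> normal32 A"
      "\<delta> \<le> \<xi>' \<bullet> normal32 A" "dist \<xi>' \<xi> < d"
    then have "(A, \<xi>) \<in> Q" "(A, \<xi>') \<in> Q" "dist (A, \<xi>') (A, \<xi>) < d"
      unfolding Q_def by (auto simp: dist_Pair_Pair)
    from d[OF this] show "W (augment A \<xi>') \<le> W (augment A \<xi>) + ennreal e" by simp
  qed
qed

lemma polynomial_near_continuous_field:
  fixes G :: "'a::euclidean_space \<Rightarrow> real^2^3" and \<phi> :: "'a \<Rightarrow> real^3"
  assumes K: "compact K" and \<phi>: "continuous_on K \<phi>" and M: "\<And>x. x \<in> K \<Longrightarrow> norm (G x) \<le> M"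
    and "0 < \<delta>" and bounds: "\<And>x. x \<in> K \<Longrightarrow> norm (\<phi> x) \<le> R \<and> \<delta>/2 \<le> \<phi> x \<bullet> normal32 (G x)"
    and "0 < e"
  obtains g where "polynomial_function g"
    "\<And>x. x \<in> K \<Longrightarrow> norm (g x) \<le> R + 1 \<and> \<delta>/4 \<le> g x \<bullet> normal32 (G x)
      \<and> W (augment (G x) (g x)) \<le> W (augment (G x) (\<phi> x)) + ennreal e"
proof -
  obtain d where "0 < d" and d: "\<And>A \<xi> \<xi>'. norm A \<le> M \<Longrightarrow> norm \<xi> \<le> R + 1 \<Longrightarrow> norm \<xi>' \<le> R + 1
      \<Longrightarrow> \<delta>/4 \<le> \<xi> \<bullet> normal32 A \<Longrightarrow> \<delta>/4 \<le> \<xi>' \<bullet> normal32 A \<Longrightarrow> dist \<xi>' \<xi> < d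
      \<Longrightarrow> W (augment A \<xi>') \<le> W (augment A \<xi>) + ennreal e"
    using W_augment_uniformly_continuous[of "\<delta>/4" e M "R + 1"] \<open>0 < \<delta>\<close> \<open>0 < e\<close> by auto
  define \<tau> where "\<tau> = min (min 1 d) (\<delta> / (4 * (M\<^sup>2 + 1)))"
  have "0 < \<tau>" "\<tau> \<le> 1" "\<tau> \<le> d" and \<tau>_M: "\<tau> * M\<^sup>2 \<le> \<delta>/4"
  proof -
    have M2: "0 < M\<^sup>2 + 1" by (simp add: add_nonneg_pos)
    then show "0 < \<tau>" "\<tau> \<le> 1" "\<tau> \<le> d" unfolding \<tau>_def using \<open>0 < d\<close> \<open>0 < \<delta>\<close> by auto
    have "\<tau> * M\<^sup>2 \<le> \<delta> / (4 * (M\<^sup>2 + 1)) * (M\<^sup>2 + 1)"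
      unfolding \<tau>_def by (intro mult_mono) (use M2 \<open>0 < \<delta>\<close> in auto)
    also have "\<dots> = \<delta>/4" using M2 by (simp add: field_simps)
    finally show "\<tau> * M\<^sup>2 \<le> \<delta>/4" .
  qed
  obtain g where "polynomial_function g" and g: "\<And>x. x \<in> K \<Longrightarrow> norm (\<phi> x - g x) < \<tau>"
    using Stone_Weierstrass_polynomial_function[OF K \<phi> \<open>0 < \<tau>\<close>] by blast
  have "norm (g x) \<le> R + 1 \<and> \<delta>/4 \<le> g x \<bullet> normal32 (G x)
      \<and> W (augment (G x) (g x)) \<le> W (augment (G x) (\<phi> x)) + ennreal e" if x: "x \<in> K" for x
  proof -
    have "norm (g x) \<le> norm (\<phi> x) + norm (\<phi> x - g x)"
      using norm_triangle_ineq4[of "\<phi> x" "\<phi> x - g x"] by simp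
    then have g_R: "norm (g x) \<le> R + 1"
      using g[OF x] \<open>\<tau> \<le> 1\<close> bounds[OF x] by linarith
    have "\<bar>(\<phi> x - g x) \<bullet> normal32 (G x)\<bar> \<le> norm (\<phi> x - g x) * norm (normal32 (G x))"
      by (rule Cauchy_Schwarz_ineq2)
    also have "\<dots> \<le> \<tau> * M\<^sup>2"
      using g[OF x] norm_normal32_le[of "G x"] power_mono[OF M[OF x], of 2] \<open>0 < \<tau>\<close>
      by (intro mult_mono) auto
    finally have g_\<delta>: "\<delta>/4 \<le> g x \<bullet> normal32 (G x)"
      using \<tau>_M bounds[OF x] unfolding inner_diff_left by linarith
    have "dist (g x) (\<phi> x) < d"
      using g[OF x] \<open>\<tau> \<le> d\<close> by (simp add: dist_norm norm_minus_commute)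
    with M[OF x] bounds[OF x] g_R g_\<delta> \<open>0 < \<delta>\<close>
    have "W (augment (G x) (g x)) \<le> W (augment (G x) (\<phi> x)) + ennreal e"
      by (intro d) auto
    with g_R g_\<delta> show ?thesis by simp
  qed
  with \<open>polynomial_function g\<close> show ?thesis by (rule that)
qed

lemma polynomial_field_energy_estimate:
  fixes G :: "'a::euclidean_space \<Rightarrow> real^2^3"
  assumes K: "compact K" and G: "continuous_on K G" and M: "\<And>x. x \<in> K \<Longrightarrow> norm (G x) \<le> M"
    and fin: "\<And>x. x \<in> K \<Longrightarrow> W0 W (G x) \<noteq> \<infinity>" and "0 < \<delta>"
    and nondeg: "\<And>x \<xi>. x \<in> K \<Longrightarrow> W (augment (G x) \<xi>) \<le> W0 W (G x) + 1
      \<Longrightarrow> norm \<xi> \<le> R \<and> \<delta> \<le> \<xi> \<bullet> normal32 (G x)"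
    and L: "\<And>F. \<delta>/4 \<le> det F \<Longrightarrow> norm F \<le> M + (R + 1) \<Longrightarrow> W F \<le> ennreal L"
    and U: "open U" "U \<subseteq> K" and \<epsilon>: "0 < \<epsilon>" "\<epsilon> \<le> 1" and "0 < e"
  obtains g where "polynomial_function g"
    "\<And>x. x \<in> K \<Longrightarrow> norm (g x) \<le> R + 1 \<and> \<delta>/4 \<le> g x \<bullet> normal32 (G x)"
    "(\<integral>\<^sup>+x\<in>U. W (augment (G x) (g x)) \<partial>lborel)
      \<le> (\<integral>\<^sup>+x\<in>U. W0 W (G x) \<partial>lborel) + ennreal (2 * \<epsilon>) * emeasure lborel U + ennreal L * ennreal e"
proof -
  obtain \<phi> B where \<phi>: "continuous_on K \<phi>" and B: "B \<in> sets borel" "emeasure lborel B \<le> ennreal e"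
    and \<phi>_bounds: "\<And>x. x \<in> K \<Longrightarrow> norm (\<phi> x) \<le> R \<and> \<delta>/2 \<le> \<phi> x \<bullet> normal32 (G x)"
    and \<phi>_good: "\<And>x. x \<in> K - B \<Longrightarrow> W (augment (G x) (\<phi> x)) \<le> W0 W (G x) + ennreal \<epsilon>"
    using continuous_near_minimizer[OF K G fin \<epsilon> \<open>0 < \<delta>\<close> nondeg \<open>0 < e\<close>] by blast
  obtain g where g: "polynomial_function g"
    and g_bounds: "\<And>x. x \<in> K \<Longrightarrow> norm (g x) \<le> R + 1 \<and> \<delta>/4 \<le> g x \<bullet> normal32 (G x)
      \<and> W (augment (G x) (g x)) \<le> W (augment (G x) (\<phi> x)) + ennreal \<epsilon>"
    using polynomial_near_continuous_field[OF K \<phi> M \<open>0 < \<delta>\<close> \<phi>_bounds \<open>0 < \<epsilon>\<close>] by blast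
  have "(\<integral>\<^sup>+x\<in>U. W (augment (G x) (g x)) \<partial>lborel)
      \<le> (\<integral>\<^sup>+x\<in>U. W0 W (G x) \<partial>lborel) + ennreal (2 * \<epsilon>) * emeasure lborel U
        + ennreal L * emeasure lborel B"
  proof (rule set_nn_integral_le_off_small_set)
    have "continuous_on U (\<lambda>x. W0 W (G x))"
      using continuous_on_W0_comp[OF G fin] U(2) by (rule continuous_on_subset)
    then show "(\<lambda>x. W0 W (G x) * indicator U x) \<in> borel_measurable lborel"
      using borel_measurable_continuous_on_indicator_ennreal[OF borel_open[OF U(1)]] by simp
    show "U \<in> sets lborel" "B \<in> sets lborel"
      using U(1) B(1) by auto
  next
    fix x assume "x \<in> U - B"
    with U(2) have "x \<in> K - B" by blast
    have "W (augment (G x) (g x)) \<le> W (augment (G x) (\<phi> x)) + ennreal \<epsilon>"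
      using g_bounds \<open>x \<in> K - B\<close> by blast
    also have "\<dots> \<le> (W0 W (G x) + ennreal \<epsilon>) + ennreal \<epsilon>"
      using \<phi>_good[OF \<open>x \<in> K - B\<close>] by (rule add_right_mono)
    also have "\<dots> = W0 W (G x) + ennreal (2 * \<epsilon>)"
      using \<open>0 < \<epsilon>\<close> by (simp add: add.assoc flip: ennreal_plus)
    finally show "W (augment (G x) (g x)) \<le> W0 W (G x) + ennreal (2 * \<epsilon>)" .
  next
    fix x assume "x \<in> U \<inter> B"
    with U(2) have "x \<in> K" by blast
    have "norm (augment (G x) (g x)) \<le> M + (R + 1)"
      using norm_augment_le[of "G x" "g x"] M[OF \<open>x \<in> K\<close>] g_bounds[OF \<open>x \<in> K\<close>] by linarith
    with g_bounds[OF \<open>x \<in> K\<close>] show "W (augment (G x) (g x)) \<le> ennreal L"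
      by (intro L) (simp_all add: det_augment)
  qed
  also have "\<dots> \<le> (\<integral>\<^sup>+x\<in>U. W0 W (G x) \<partial>lborel) + ennreal (2 * \<epsilon>) * emeasure lborel U
      + ennreal L * ennreal e"
    using B(2) by (intro add_left_mono mult_left_mono) simp_all
  finally have energy: "(\<integral>\<^sup>+x\<in>U. W (augment (G x) (g x)) \<partial>lborel)
      \<le> (\<integral>\<^sup>+x\<in>U. W0 W (G x) \<partial>lborel) + ennreal (2 * \<epsilon>) * emeasure lborel U + ennreal L * ennreal e" .
  show ?thesis
  proof (rule that[OF g _ energy])
    show "norm (g x) \<le> R + 1 \<and> \<delta>/4 \<le> g x \<bullet> normal32 (G x)" if "x \<in> K" for x
      using g_bounds[OF that] by simp
  qed
qed

lemma polynomial_field_near_W0_energy: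
  fixes G :: "'a::euclidean_space \<Rightarrow> real^2^3"
  assumes K: "compact K" and G: "continuous_on K G" and M: "\<And>x. x \<in> K \<Longrightarrow> norm (G x) \<le> M"
    and fin: "\<And>x. x \<in> K \<Longrightarrow> W0 W (G x) \<noteq> \<infinity>" and "0 < \<delta>"
    and nondeg: "\<And>x \<xi>. x \<in> K \<Longrightarrow> W (augment (G x) \<xi>) \<le> W0 W (G x) + 1
      \<Longrightarrow> norm \<xi> \<le> R \<and> \<delta> \<le> \<xi> \<bullet> normal32 (G x)"
    and U: "open U" "U \<subseteq> K" and "0 < e"
  obtains g where "polynomial_function g"
    "\<And>x. x \<in> K \<Longrightarrow> norm (g x) \<le> R + 1 \<and> \<delta>/4 \<le> g x \<bullet> normal32 (G x)"
    "(\<integral>\<^sup>+x\<in>U. W (augment (G x) (g x)) \<partial>lborel) \<le> (\<integral>\<^sup>+x\<in>U. W0 W (G x) \<partial>lborel) + ennreal e"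
proof -
  define \<mu> where "\<mu> = measure lborel U"
  have "emeasure lborel U < \<infinity>"
    using U(2) by (intro emeasure_bounded_finite bounded_subset[OF compact_imp_bounded[OF K]])
  then have U_measure: "emeasure lborel U = ennreal \<mu>"
    unfolding \<mu>_def by (intro emeasure_eq_ennreal_measure) simp
  have "0 \<le> \<mu>" unfolding \<mu>_def by simp
  have "0 < \<delta>/4" using \<open>0 < \<delta>\<close> by simp
  then obtain L where "0 \<le> L"
    and L: "\<And>F. \<delta>/4 \<le> det F \<Longrightarrow> norm F \<le> M + (R + 1) \<Longrightarrow> W F \<le> ennreal L"
    using W_bounded_where_det_ge by blast
  define \<epsilon> where "\<epsilon> = min 1 (e / (4 * (\<mu> + 1)))"
  define e' where "e' = e / (2 * (L + 1))"
  have "0 < \<epsilon>" "\<epsilon> \<le> 1" "0 < e'"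
    unfolding \<epsilon>_def e'_def using \<open>0 < e\<close> \<open>0 \<le> \<mu>\<close> \<open>0 \<le> L\<close> by auto
  obtain g where g: "polynomial_function g"
    and g_bounds: "\<And>x. x \<in> K \<Longrightarrow> norm (g x) \<le> R + 1 \<and> \<delta>/4 \<le> g x \<bullet> normal32 (G x)"
    and energy: "(\<integral>\<^sup>+x\<in>U. W (augment (G x) (g x)) \<partial>lborel)
      \<le> (\<integral>\<^sup>+x\<in>U. W0 W (G x) \<partial>lborel) + ennreal (2 * \<epsilon>) * emeasure lborel U + ennreal L * ennreal e'"
    using polynomial_field_energy_estimate[OF K G M fin \<open>0 < \<delta>\<close> nondeg L U \<open>0 < \<epsilon>\<close> \<open>\<epsilon> \<le> 1\<close> \<open>0 < e'\<close>]
    by blast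
  have "2 * \<epsilon> * \<mu> \<le> 2 * (e / (4 * (\<mu> + 1))) * \<mu>"
    unfolding \<epsilon>_def using \<open>0 \<le> \<mu>\<close> by (intro mult_right_mono) auto
  also have "\<dots> \<le> e / 2"
    using \<open>0 < e\<close> \<open>0 \<le> \<mu>\<close> by (simp add: field_simps)
  finally have "2 * \<epsilon> * \<mu> \<le> e / 2" .
  moreover have "L * e' \<le> e / 2"
    unfolding e'_def using \<open>0 < e\<close> \<open>0 \<le> L\<close> by (simp add: field_simps)
  ultimately have "ennreal (2 * \<epsilon>) * emeasure lborel U + ennreal L * ennreal e' \<le> ennreal e"
    using U_measure \<open>0 < \<epsilon>\<close> \<open>0 \<le> \<mu>\<close> \<open>0 \<le> L\<close> \<open>0 < e'\<close>
    by (simp flip: ennreal_mult ennreal_plus del: ennreal_plus_if) (intro ennreal_leI; linarith)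
  with energy have "(\<integral>\<^sup>+x\<in>U. W (augment (G x) (g x)) \<partial>lborel) \<le> (\<integral>\<^sup>+x\<in>U. W0 W (G x) \<partial>lborel) + ennreal e"
    by (simp add: add.assoc) (meson add_left_mono order_trans)
  with g g_bounds show ?thesis by (rule that)
qed

lemma relaxation_formula:
  fixes G :: "real^2 \<Rightarrow> real^2^3"
  assumes fin: "\<And>A. norm A \<le> M \<Longrightarrow> \<eta> \<le> norm (normal32 A) \<Longrightarrow> W0 W A \<noteq> \<infinity>" and "0 < \<delta>"
    and nondeg: "\<And>A \<xi>. norm A \<le> M \<Longrightarrow> \<eta> \<le> norm (normal32 A) \<Longrightarrow> W (augment A \<xi>) \<le> W0 W A + 1
      \<Longrightarrow> norm \<xi> \<le> R \<and> \<delta> \<le> \<xi> \<bullet> normal32 A"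
    and \<beta>: "R + 1 \<le> \<beta>" "1 / \<beta> \<le> \<delta>/4"
    and \<Omega>: "open \<Omega>" "bounded \<Omega>" and G: "continuous_on (closure \<Omega>) G"
    and G_\<eta>: "\<And>x. x \<in> closure \<Omega> \<Longrightarrow> \<eta> \<le> norm (normal32 (G x))"
    and G_M: "\<And>x. x \<in> closure \<Omega> \<Longrightarrow> norm (G x) \<le> M"
    and U: "open U" "U \<subseteq> \<Omega>"
  shows "(\<integral>\<^sup>+x\<in>U. W0 W (G x) \<partial>lborel)
    = (INF \<phi>\<in>{\<phi>. smooth_up_to_boundary \<Omega> \<phi> \<and> (\<forall>x\<in>closure \<Omega>. det (augment (G x) (\<phi> x)) \<ge> 1 / \<beta>)
                    \<and> (\<forall>x\<in>\<Omega>. norm (\<phi> x) \<le> \<beta>)}.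
        \<integral>\<^sup>+x\<in>U. W (augment (G x) (\<phi> x)) \<partial>lborel)"
    (is "?I = (INF \<phi>\<in>?\<Phi>. ?J \<phi>)")
proof (rule antisym)
  show "?I \<le> (INF \<phi>\<in>?\<Phi>. ?J \<phi>)"
    by (intro INF_greatest nn_integral_mono mult_right_mono W0_le) simp
  show "(INF \<phi>\<in>?\<Phi>. ?J \<phi>) \<le> ?I"
  proof (rule ennreal_le_epsilon)
    fix e :: real assume "0 < e"
    have "compact (closure \<Omega>)" "U \<subseteq> closure \<Omega>"
      using \<Omega>(2) U(2) closure_subset by auto
    moreover have "W0 W (G x) \<noteq> \<infinity>" if "x \<in> closure \<Omega>" for x
      using fin[OF G_M[OF that] G_\<eta>[OF that]] .
    moreover have "norm \<xi> \<le> R \<and> \<delta> \<le> \<xi> \<bullet> normal32 (G x)"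
      if "x \<in> closure \<Omega>" "W (augment (G x) \<xi>) \<le> W0 W (G x) + 1" for x \<xi>
      using nondeg[OF G_M[OF that(1)] G_\<eta>[OF that(1)] that(2)] .
    ultimately obtain g where g: "polynomial_function g"
      and g_bounds: "\<And>x. x \<in> closure \<Omega> \<Longrightarrow> norm (g x) \<le> R + 1 \<and> \<delta>/4 \<le> g x \<bullet> normal32 (G x)"
      and energy: "?J g \<le> ?I + ennreal e"
      using polynomial_field_near_W0_energy[OF _ G G_M _ \<open>0 < \<delta>\<close> _ U(1) _ \<open>0 < e\<close>] by blast
    have "g \<in> ?\<Phi>"
    proof (intro CollectI conjI ballI)
      show "smooth_up_to_boundary \<Omega> g"
        using g by (rule polynomial_function_smooth_up_to_boundary)
      show "1 / \<beta> \<le> det (augment (G x) (g x))" if "x \<in> closure \<Omega>" for x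
        using g_bounds[OF that] \<beta>(2) unfolding det_augment by linarith
      show "norm (g x) \<le> \<beta>" if "x \<in> \<Omega>" for x
        using g_bounds[of x] that closure_subset \<beta>(1) by force
    qed
    then have "(INF \<phi>\<in>?\<Phi>. ?J \<phi>) \<le> ?J g" by (rule INF_lower)
    also note energy
    finally show "(INF \<phi>\<in>?\<Phi>. ?J \<phi>) \<le> ?I + ennreal e" .
  qed
qed

end

theorem lemma4p9:
  fixes p :: real and W :: "real^3^3 \<Rightarrow> ennreal"
  assumes "1 < p" and "hyp_W p W"
  shows "\<forall>\<eta>>0. \<forall>M. \<exists>\<beta>>0. \<forall>(\<Omega>::(real^2) set) (G::real^2 \<Rightarrow> real^2^3).
     open \<Omega> \<and> bounded \<Omega> \<and> uniformly_continuous_on (closure \<Omega>) G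
     \<and> (\<forall>x\<in>closure \<Omega>. norm (cross3 (col32 (G x) 1) (col32 (G x) 2)) \<ge> \<eta>)
     \<and> (\<forall>x\<in>closure \<Omega>. norm (G x) \<le> M)
     \<longrightarrow> (\<forall>U. open U \<and> U \<subseteq> \<Omega> \<longrightarrow>
           (\<integral>\<^sup>+x\<in>U. W0 W (G x) \<partial>lborel)
         = (INF \<phi>\<in>{\<phi>. smooth_up_to_boundary \<Omega> \<phi>
                       \<and> (\<forall>x\<in>closure \<Omega>. det (augment (G x) (\<phi> x)) \<ge> 1 / \<beta>)
                       \<and> (\<forall>x\<in>\<Omega>. norm (\<phi> x) \<le> \<beta>)}.
              \<integral>\<^sup>+x\<in>U. W (augment (G x) (\<phi> x)) \<partial>lborel))"
    (is "\<forall>\<eta>>0. \<forall>M. \<exists>\<beta>>0. ?P \<eta> M \<beta>")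
proof (intro allI impI)
  fix \<eta> M :: real assume "0 < \<eta>"
  interpret energy_density p W
    using assms by unfold_locales
  obtain R \<delta> where "0 < \<delta>"
    and fin: "\<And>A. norm A \<le> M \<Longrightarrow> \<eta> \<le> norm (normal32 A) \<Longrightarrow> W0 W A \<noteq> \<infinity>"
    and nondeg: "\<And>A \<xi>. norm A \<le> M \<Longrightarrow> \<eta> \<le> norm (normal32 A) \<Longrightarrow> W (augment A \<xi>) \<le> W0 W A + 1
      \<Longrightarrow> norm \<xi> \<le> R \<and> \<delta> \<le> \<xi> \<bullet> normal32 A"
    by (rule near_minimizers_nondegenerate[OF \<open>0 < \<eta>\<close>, where M = M]) (rule that)
  define \<beta> where "\<beta> = max (R + 1) (4 / \<delta>)"
  have "R + 1 \<le> \<beta>" "4 / \<delta> \<le> \<beta>" "0 < 4 / \<delta>"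
    unfolding \<beta>_def using \<open>0 < \<delta>\<close> by auto
  then have "0 < \<beta>" by linarith
  with \<open>4 / \<delta> \<le> \<beta>\<close> \<open>0 < \<delta>\<close> have "1 / \<beta> \<le> \<delta>/4"
    by (simp add: field_simps)
  have "?P \<eta> M \<beta>"
    by (intro allI impI, elim conjE,
        rule relaxation_formula[OF fin \<open>0 < \<delta>\<close> nondeg \<open>R + 1 \<le> \<beta>\<close> \<open>1 / \<beta> \<le> \<delta>/4\<close>])
      (auto simp: normal32_def intro: uniformly_continuous_imp_continuous)
  with \<open>0 < \<beta>\<close> show "\<exists>\<beta>>0. ?P \<eta> M \<beta>" by blast
qed

end
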